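(* Let $(\mu_n)_{n\ge1}$ be probability measures on $\mathbb R$ converging in distribution to a probability measure $\mu_\infty$. Assume that there are real numbers $B_n(\alpha)$, $n\ge1$, $\alpha>0$, such that for every continuous compactly supported $\phi:\mathbb R\to\mathbb R$ with $\|\phi\|_\infty\le1$, every $n\ge1$ and every $\alpha>0$, \[ \Big|\int_{\mathbb R}\phi\,d\mu_n\Big|\le \frac{\sup_{x\in\mathbb R}\big|\int_0^x\phi(t)\,dt\big|}{\alpha}+|B_n(\alpha)|, \qquad\text{and}\qquad \lim_{\alpha\to0}\limsup_{n\to\infty}|B_n(\alpha)|=0. \] Then $\mu_n$ converges to $\mu_\infty$ in total variation. *)

theory Defs
  imports "HOL-Probability.Probability"
begin

definition tv_dist :: "real measure \<Rightarrow> real measure \<Rightarrow> real" where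
  "tv_dist M N = (SUP A \<in> sets borel. \<bar>measure M A - measure N A\<bar>)"

definition tv_conv :: "(nat \<Rightarrow> real measure) \<Rightarrow> real measure \<Rightarrow> bool" where
  "tv_conv M_seq M \<longleftrightarrow> (\<lambda>n. tv_dist (M_seq n) M) \<longlonglongrightarrow> 0"

end

theory Submission
  imports Defs
begin

text \<open>
  Fix \<open>\<epsilon> > 0\<close>. Tightness of \<open>\<mu>\<^sub>\<infinity>\<close> and weak convergence give an interval carrying
  mass \<open>\<ge> 1 - \<epsilon>\<close> for \<open>\<mu>\<^sub>\<infinity>\<close> and all large \<open>n\<close>; by regularity and Urysohn's lemma it then
  suffices to show that \<open>\<integral>\<phi> d\<mu>\<^sub>n \<rightarrow> \<integral>\<phi> d\<mu>\<^sub>\<infinity>\<close> uniformly over continuous \<open>\<phi>\<close> with \<open>\<bar>\<phi>\<bar> \<le> 1\<close>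
  supported in a fixed interval. Write \<open>\<phi> = 2g + \<psi>\<close>, where \<open>\<psi>(x) = h\<^sup>-\<^sup>1\<integral>\<^sub>x\<^sup>x\<^sup>+\<^sup>h \<phi>\<close> is the
  Steklov average. The primitive of \<open>g\<close> is bounded by \<open>h\<close>, so the hypothesis gives
  \<open>\<bar>\<integral>g d\<mu>\<^sub>n\<bar> \<le> h/\<alpha> + \<bar>B\<^sub>n(\<alpha>)\<bar>\<close>, which is small for large \<open>n\<close> (and in the limit) once \<open>\<alpha>\<close> is
  chosen with \<open>limsup \<bar>B\<^sub>n(\<alpha>)\<bar>\<close> small and \<open>h = \<alpha>\<epsilon>\<close>. The functions \<open>\<psi>\<close> are uniformly
  Lipschitz with common support, and on such a family weak convergence is uniform, since
  each member is uniformly close to its interpolant by finitely many fixed hat functions.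
\<close>

definition primitive :: "(real \<Rightarrow> real) \<Rightarrow> real \<Rightarrow> real" where
  "primitive f x = (LBINT t=0..ereal x. f t)"

lemma has_real_derivative_primitive:
  assumes "continuous_on UNIV f"
  shows "(primitive f has_real_derivative f x) (at x)"
proof -
  define a where "a = min 0 x - 1"
  define b where "b = max 0 x + 1"
  have "(primitive f has_vector_derivative f x) (at x within {a..b})"
    unfolding primitive_def zero_ereal_def
    by (rule interval_integral_FTC2) (auto simp: a_def b_def intro: continuous_on_subset[OF assms])
  then have "(primitive f has_vector_derivative f x) (at x within {a<..<b})"
    by (rule has_vector_derivative_within_subset) auto
  then have "(primitive f has_vector_derivative f x) (at x)"
    by (subst (asm) has_vector_derivative_within_open) (auto simp: a_def b_def)
  then show ?thesis
    by (simp add: has_real_derivative_iff_has_vector_derivative)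
qed

lemma continuous_on_primitive: "continuous_on UNIV f \<Longrightarrow> continuous_on UNIV (primitive f)"
  by (meson DERIV_isCont continuous_at_imp_continuous_on has_real_derivative_primitive)

lemma abs_primitive_diff_le:
  assumes "continuous_on UNIV f" "\<And>x. \<bar>f x\<bar> \<le> C"
  shows "\<bar>primitive f x - primitive f y\<bar> \<le> C * \<bar>x - y\<bar>"
  using field_differentiable_bound[OF convex_UNIV, of "primitive f" f C x y] assms
  by (auto intro: has_field_derivative_at_within has_real_derivative_primitive)

lemma LBINT_eq_diff_of_has_real_derivative:
  fixes f F :: "real \<Rightarrow> real"
  assumes "continuous_on UNIV f" "\<And>x. (F has_real_derivative f x) (at x)"
  shows "(LBINT t=a..b. f t) = F b - F a"
  by (rule interval_integral_FTC_finite)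
     (auto intro: continuous_on_subset[OF assms(1)] has_field_derivative_at_within[OF assms(2)]
       simp: has_real_derivative_iff_has_vector_derivative[symmetric])

definition steklov :: "real \<Rightarrow> (real \<Rightarrow> real) \<Rightarrow> real \<Rightarrow> real" where
  "steklov h f x = (primitive f (x + h) - primitive f x) / h"

lemma continuous_on_steklov:
  "continuous_on UNIV f \<Longrightarrow> continuous_on UNIV (steklov h f)"
  unfolding steklov_def
  by (cases "h = 0") (auto intro!: continuous_intros continuous_on_compose2[OF continuous_on_primitive])

lemma abs_steklov_le:
  assumes "continuous_on UNIV f" "\<And>x. \<bar>f x\<bar> \<le> C" "h > 0"
  shows "\<bar>steklov h f x\<bar> \<le> C"
  using abs_primitive_diff_le[OF assms(1,2), of "x + h" x] assms(3)
  by (simp add: steklov_def abs_divide pos_divide_le_eq)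

lemma steklov_eq_0:
  assumes "continuous_on UNIV f" "\<And>x. x \<notin> {a..b} \<Longrightarrow> f x = 0" "h > 0" "x \<notin> {a - h..b}"
  shows "steklov h f x = 0"
proof -
  have "norm (primitive f (x + h) - primitive f x) \<le> 0 * norm ((x + h) - x)"
  proof (rule field_differentiable_bound[of "{x..x + h}"])
    show "(primitive f has_field_derivative f z) (at z within {x..x + h})" for z
      by (rule has_field_derivative_at_within[OF has_real_derivative_primitive[OF assms(1)]])
    show "norm (f z) \<le> 0" if "z \<in> {x..x + h}" for z
      using that assms(2)[of z] assms(4) by auto
  qed (use assms(3) in auto)
  then show ?thesis
    by (simp add: steklov_def)
qed

lemma lipschitz_on_steklov:
  assumes "continuous_on UNIV f" "\<And>x. \<bar>f x\<bar> \<le> C" "h > 0"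
  shows "(2 * C / h)-lipschitz_on UNIV (steklov h f)"
proof (rule lipschitz_onI)
  show "0 \<le> 2 * C / h"
    using assms(2)[of 0] assms(3) by simp
  fix x y :: real
  have "\<bar>(primitive f (x + h) - primitive f (y + h)) - (primitive f x - primitive f y)\<bar>
      \<le> C * \<bar>x - y\<bar> + C * \<bar>x - y\<bar>"
    using abs_primitive_diff_le[OF assms(1,2), of "x + h" "y + h"]
      abs_primitive_diff_le[OF assms(1,2), of x y] by (simp add: abs_le_iff)
  then show "dist (steklov h f x) (steklov h f y) \<le> 2 * C / h * dist x y"
    using assms(3)
    by (simp add: steklov_def dist_real_def diff_divide_distrib[symmetric] abs_divide
        divide_le_eq algebra_simps)
qed

lemma abs_diff_steklov_le:
  assumes F: "continuous_on UNIV F" and lip: "\<And>y. \<bar>F x - F y\<bar> \<le> C * \<bar>x - y\<bar>" and h: "h > 0"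
  shows "\<bar>F x - steklov h F x\<bar> \<le> C * h"
proof -
  define m where "m s = s * F x - (primitive F (x + s) - primitive F x)" for s
  have m_deriv: "(m has_real_derivative F x - F (x + s)) (at s)" for s
  proof -
    have "((\<lambda>s. primitive F (x + s)) has_real_derivative F (x + s)) (at s)"
      using DERIV_shift[of "primitive F" "F (x + s)" s x] has_real_derivative_primitive[OF F]
      by (simp add: add.commute)
    then show ?thesis
      unfolding m_def by (auto intro!: derivative_eq_intros)
  qed
  have "norm (m h - m 0) \<le> (C * h) * norm (h - 0)"
  proof (rule field_differentiable_bound[of "{0..h}"])
    show "(m has_field_derivative F x - F (x + s)) (at s within {0..h})" for s
      by (rule has_field_derivative_at_within[OF m_deriv])
    show "norm (F x - F (x + s)) \<le> C * h" if "s \<in> {0..h}" for s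
    proof -
      have "C * s \<le> C * h"
        using that lip[of "x + 1"] by (intro mult_left_mono) auto
      then show ?thesis
        using lip[of "x + s"] that by simp
    qed
  qed (use h in auto)
  moreover have "F x - steklov h F x = m h / h"
    using h by (simp add: steklov_def m_def field_simps)
  ultimately show ?thesis
    using h by (simp add: abs_divide divide_le_eq m_def)
qed

text \<open>The remainder \<open>f - steklov h f\<close> has the primitive \<open>F - steklov h F\<close>, \<open>F = primitive f\<close>.\<close>
lemma abs_LBINT_diff_steklov_le:
  assumes f: "continuous_on UNIV f" and C: "\<And>x. \<bar>f x\<bar> \<le> C" and h: "h > 0"
  shows "\<bar>LBINT t=0..ereal x. f t - steklov h f t\<bar> \<le> 2 * C * h"
proof -
  define F where "F = primitive f"
  have F_cont: "continuous_on UNIV F"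
    unfolding F_def by (rule continuous_on_primitive[OF f])
  have F_deriv: "(F has_real_derivative f x) (at x)" for x
    unfolding F_def by (rule has_real_derivative_primitive[OF f])
  have "((\<lambda>x. F x - steklov h F x) has_real_derivative f x - steklov h f x) (at x)" for x
  proof -
    have "((\<lambda>x. primitive F (x + h)) has_real_derivative F (x + h)) (at x)"
      using has_real_derivative_primitive[OF F_cont, of "x + h"] by (simp add: DERIV_shift)
    moreover have "steklov h f x = (F (x + h) - F x) / h"
      by (simp add: steklov_def F_def)
    ultimately show ?thesis
      unfolding steklov_def[of h F] using h
      by (auto intro!: derivative_eq_intros F_deriv has_real_derivative_primitive[OF F_cont]
          simp: diff_divide_distrib)
  qed
  then have "(LBINT t=ereal 0..ereal x. f t - steklov h f t) =
      (F x - steklov h F x) - (F 0 - steklov h F 0)"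
    by (rule LBINT_eq_diff_of_has_real_derivative[rotated])
      (intro continuous_intros f continuous_on_steklov)
  moreover have dev: "\<bar>F y - steklov h F y\<bar> \<le> C * h" for y
    using abs_primitive_diff_le[OF f C] by (intro abs_diff_steklov_le[OF F_cont _ h]) (simp add: F_def)
  ultimately show ?thesis
    using dev[of x] dev[of 0] abs_triangle_ineq4[of "F x - steklov h F x" "F 0 - steklov h F 0"]
    unfolding zero_ereal_def by linarith
qed

definition hat :: "real \<Rightarrow> real" where
  "hat y = max 0 (1 - \<bar>y\<bar>)"

definition interpolant :: "real \<Rightarrow> int \<Rightarrow> (real \<Rightarrow> real) \<Rightarrow> real \<Rightarrow> real" where
  "interpolant \<delta> N f x = (\<Sum>k\<in>{-N..N}. f (of_int k * \<delta>) * hat (x / \<delta> - of_int k))"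

lemma continuous_on_hat: "continuous_on UNIV hat"
  unfolding hat_def by (intro continuous_intros)

lemma abs_hat_le_1: "\<bar>hat y\<bar> \<le> 1"
  by (simp add: hat_def)

lemma hat_eq_0: "\<bar>y\<bar> \<ge> 1 \<Longrightarrow> hat y = 0"
  by (simp add: hat_def)

lemma interpolant_eq_convex_comb:
  assumes zero: "\<And>k. k \<notin> {-N..N} \<Longrightarrow> f (of_int k * \<delta>) = 0"
    and x: "x / \<delta> = of_int j + t" and t: "0 \<le> t" "t < 1"
  shows "interpolant \<delta> N f x = (1 - t) * f (of_int j * \<delta>) + t * f (of_int (j + 1) * \<delta>)"
proof -
  have term_eq: "f (of_int k * \<delta>) * hat (x / \<delta> - of_int k) =
      (if k = j then (1 - t) * f (of_int j * \<delta>) else 0) +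
      (if k = j + 1 then t * f (of_int (j + 1) * \<delta>) else 0)" for k
  proof -
    consider "k = j" | "k = j + 1" | "k \<le> j - 1 \<or> k \<ge> j + 2"
      by linarith
    then show ?thesis
    proof cases
      case 3
      then have "\<bar>x / \<delta> - of_int k\<bar> \<ge> 1"
        unfolding x using t by (auto simp: abs_if)
      then show ?thesis
        using 3 by (auto simp: hat_eq_0)
    qed (use t in \<open>auto simp: x hat_def\<close>)
  qed
  show ?thesis
    unfolding interpolant_def term_eq sum.distrib
    using zero[of j] zero[of "j + 1"] by (auto simp: sum.delta)
qed

lemma abs_diff_interpolant_le:
  assumes f: "C-lipschitz_on UNIV f" and \<delta>: "\<delta> > 0"
    and zero: "\<And>k. k \<notin> {-N..N} \<Longrightarrow> f (of_int k * \<delta>) = 0"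
  shows "\<bar>f x - interpolant \<delta> N f x\<bar> \<le> C * \<delta>"
proof -
  define j where "j = \<lfloor>x / \<delta>\<rfloor>"
  define t where "t = x / \<delta> - of_int j"
  have t: "0 \<le> t" "t < 1"
    unfolding t_def j_def by linarith+
  have x: "x = (of_int j + t) * \<delta>"
    using \<delta> by (simp add: t_def field_simps)
  have near: "\<bar>f x - f y\<bar> \<le> C * \<delta>" if "\<bar>x - y\<bar> \<le> \<delta>" for y
    using lipschitz_on_normD[OF f, of x y] that lipschitz_on_nonneg[OF f]
    by (auto intro: order_trans mult_left_mono)
  have "\<bar>f x - interpolant \<delta> N f x\<bar> =
      \<bar>(1 - t) * (f x - f (of_int j * \<delta>)) + t * (f x - f (of_int (j + 1) * \<delta>))\<bar>"
    using interpolant_eq_convex_comb[of N f \<delta> x j t, OF zero _ t] \<delta> by (simp add: t_def algebra_simps)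
  also have "\<dots> \<le> \<bar>1 - t\<bar> * \<bar>f x - f (of_int j * \<delta>)\<bar> + \<bar>t\<bar> * \<bar>f x - f (of_int (j + 1) * \<delta>)\<bar>"
    by (metis abs_mult abs_triangle_ineq)
  also have "\<dots> \<le> (1 - t) * (C * \<delta>) + t * (C * \<delta>)"
  proof (intro add_mono mult_mono)
    show "\<bar>f x - f (of_int j * \<delta>)\<bar> \<le> C * \<delta>" "\<bar>f x - f (of_int (j + 1) * \<delta>)\<bar> \<le> C * \<delta>"
      using t \<delta> by (intro near; simp add: x algebra_simps)+
  qed (use t in auto)
  finally show ?thesis
    by (simp add: algebra_simps)
qed

lemma grid_point_notin_interval:
  fixes R \<delta> :: real
  assumes "\<delta> > 0" "k \<notin> {-\<lceil>R / \<delta>\<rceil>..\<lceil>R / \<delta>\<rceil>}"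
  shows "of_int k * \<delta> \<notin> {-R..R}"
proof -
  have "R / \<delta> < of_int k \<or> R / \<delta> < - of_int k"
    using assms(2) le_of_int_ceiling[of "R / \<delta>"] by auto linarith+
  then show ?thesis
    using assms(1) by (auto simp: pos_divide_less_eq)
qed

lemma continuous_on_interpolant: "continuous_on UNIV (interpolant \<delta> N f)"
  unfolding interpolant_def
  by (cases "\<delta> = 0") (auto intro!: continuous_intros continuous_on_compose2[OF continuous_on_hat])

lemma (in real_distribution) integrable_bounded_continuous:
  fixes f :: "real \<Rightarrow> real"
  assumes "continuous_on UNIV f" "\<And>x. \<bar>f x\<bar> \<le> B"
  shows "integrable M f"
proof (rule integrable_const_bound[where B = B])
  show "f \<in> borel_measurable M"
    using borel_measurable_continuous_onI[OF assms(1)] by (simp cong: measurable_cong_sets)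
qed (use assms(2) in auto)

lemma (in prob_space) abs_integral_diff_le:
  fixes f g :: "'a \<Rightarrow> real"
  assumes "integrable M f" "integrable M g" "\<And>x. \<bar>f x - g x\<bar> \<le> c"
  shows "\<bar>integral\<^sup>L M f - integral\<^sup>L M g\<bar> \<le> c"
proof -
  have "\<bar>\<integral>x. f x - g x \<partial>M\<bar> \<le> (\<integral>x. \<bar>f x - g x\<bar> \<partial>M)"
    by (rule integral_abs_bound)
  also have "\<dots> \<le> c"
    using assms by (intro integral_le_const AE_I2) auto
  finally show ?thesis
    using assms(1,2) by simp
qed

lemma (in real_distribution) integral_interpolant:
  "integral\<^sup>L M (interpolant \<delta> N f) =
    (\<Sum>k\<in>{-N..N}. f (of_int k * \<delta>) * integral\<^sup>L M (\<lambda>x. hat (x / \<delta> - of_int k)))"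
  unfolding interpolant_def
  by (subst Bochner_Integration.integral_sum, cases "\<delta> = 0")
    (auto intro!: integrable_mult_right integrable_bounded_continuous[of _ 1] abs_hat_le_1
      continuous_on_compose2[OF continuous_on_hat] continuous_intros)

lemma (in real_distribution) abs_integral_diff_interpolant_le:
  assumes f: "C-lipschitz_on UNIV f" "\<And>x. \<bar>f x\<bar> \<le> 1" and \<delta>: "\<delta> > 0"
    and zero: "\<And>k. k \<notin> {-N..N} \<Longrightarrow> f (of_int k * \<delta>) = 0"
  shows "\<bar>integral\<^sup>L M f - integral\<^sup>L M (interpolant \<delta> N f)\<bar> \<le> C * \<delta>"
proof -
  have err: "\<bar>f x - interpolant \<delta> N f x\<bar> \<le> C * \<delta>" for x
    by (rule abs_diff_interpolant_le[OF f(1) \<delta> zero])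
  have "\<bar>interpolant \<delta> N f x\<bar> \<le> 1 + C * \<delta>" for x
    using err[of x] f(2)[of x] by linarith
  then have "integrable M (interpolant \<delta> N f)"
    by (rule integrable_bounded_continuous[OF continuous_on_interpolant])
  moreover have "integrable M f"
    using f(2) by (rule integrable_bounded_continuous[OF lipschitz_on_continuous_on[OF f(1)]])
  ultimately show ?thesis
    using err by (intro abs_integral_diff_le)
qed

lemma abs_integral_interpolant_diff_le:
  assumes "real_distribution M" "real_distribution M'" "\<And>x. \<bar>f x\<bar> \<le> 1"
  shows "\<bar>integral\<^sup>L M (interpolant \<delta> N f) - integral\<^sup>L M' (interpolant \<delta> N f)\<bar> \<le>
    (\<Sum>k\<in>{-N..N}. \<bar>integral\<^sup>L M (\<lambda>x. hat (x / \<delta> - of_int k)) -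
      integral\<^sup>L M' (\<lambda>x. hat (x / \<delta> - of_int k))\<bar>)"
proof -
  have "\<bar>integral\<^sup>L M (interpolant \<delta> N f) - integral\<^sup>L M' (interpolant \<delta> N f)\<bar> =
      \<bar>\<Sum>k\<in>{-N..N}. f (of_int k * \<delta>) * (integral\<^sup>L M (\<lambda>x. hat (x / \<delta> - of_int k)) -
        integral\<^sup>L M' (\<lambda>x. hat (x / \<delta> - of_int k)))\<bar>"
    by (simp add: real_distribution.integral_interpolant[OF assms(1)]
        real_distribution.integral_interpolant[OF assms(2)] sum_subtractf right_diff_distrib)
  also have "\<dots> \<le> (\<Sum>k\<in>{-N..N}. \<bar>integral\<^sup>L M (\<lambda>x. hat (x / \<delta> - of_int k)) -
      integral\<^sup>L M' (\<lambda>x. hat (x / \<delta> - of_int k))\<bar>)"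
    using assms(3) by (intro order_trans[OF sum_abs] sum_mono) (simp add: abs_mult mult_left_le_one_le)
  finally show ?thesis .
qed

lemma abs_integral_diff_le_hat_integrals:
  fixes R \<delta> :: real
  assumes M: "real_distribution M" and M': "real_distribution M'"
    and lip: "C-lipschitz_on UNIV f" and bound: "\<And>x. \<bar>f x\<bar> \<le> 1"
    and supp: "\<And>x. x \<notin> {-R..R} \<Longrightarrow> f x = 0" and \<delta>: "\<delta> > 0"
  shows "\<bar>integral\<^sup>L M f - integral\<^sup>L M' f\<bar> \<le> 2 * C * \<delta> +
    (\<Sum>k\<in>{-\<lceil>R / \<delta>\<rceil>..\<lceil>R / \<delta>\<rceil>}. \<bar>integral\<^sup>L M (\<lambda>x. hat (x / \<delta> - of_int k)) -
      integral\<^sup>L M' (\<lambda>x. hat (x / \<delta> - of_int k))\<bar>)"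
proof -
  define N where "N = \<lceil>R / \<delta>\<rceil>"
  have zero: "f (of_int k * \<delta>) = 0" if "k \<notin> {-N..N}" for k
    using supp grid_point_notin_interval[OF \<delta> that[unfolded N_def]] by blast
  have "\<bar>integral\<^sup>L M f - integral\<^sup>L M (interpolant \<delta> N f)\<bar> \<le> C * \<delta>"
    by (rule real_distribution.abs_integral_diff_interpolant_le[OF M lip bound \<delta> zero])
  moreover have "\<bar>integral\<^sup>L M' f - integral\<^sup>L M' (interpolant \<delta> N f)\<bar> \<le> C * \<delta>"
    by (rule real_distribution.abs_integral_diff_interpolant_le[OF M' lip bound \<delta> zero])
  moreover have "\<bar>integral\<^sup>L M (interpolant \<delta> N f) - integral\<^sup>L M' (interpolant \<delta> N f)\<bar> \<le>
      (\<Sum>k\<in>{-N..N}. \<bar>integral\<^sup>L M (\<lambda>x. hat (x / \<delta> - of_int k)) -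
        integral\<^sup>L M' (\<lambda>x. hat (x / \<delta> - of_int k))\<bar>)"
    by (rule abs_integral_interpolant_diff_le[OF M M' bound])
  ultimately show ?thesis
    unfolding N_def by linarith
qed

lemma (in real_distribution) measure_le_integral:
  assumes "S \<in> sets borel" "continuous_on UNIV f" "\<And>x. 0 \<le> f x \<and> f x \<le> 1"
    and "\<And>x. x \<in> S \<Longrightarrow> f x = 1"
  shows "measure M S \<le> integral\<^sup>L M f"
proof -
  have "integral\<^sup>L M (indicator S :: real \<Rightarrow> real) \<le> integral\<^sup>L M f"
    using assms
    by (intro integral_mono integrable_bounded_continuous[of f 1] integrable_real_indicator)
      (auto simp: indicator_def abs_le_iff less_top[symmetric])
  then show ?thesis
    using assms(1) by simp
qed

lemma (in real_distribution) integral_le_measure: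
  assumes "S \<in> sets borel" "continuous_on UNIV f" "\<And>x. 0 \<le> f x \<and> f x \<le> 1"
    and "\<And>x. x \<notin> S \<Longrightarrow> f x = 0"
  shows "integral\<^sup>L M f \<le> measure M S"
proof -
  have "integral\<^sup>L M f \<le> integral\<^sup>L M (indicator S :: real \<Rightarrow> real)"
    using assms
    by (intro integral_mono integrable_bounded_continuous[of f 1] integrable_real_indicator)
      (auto simp: indicator_def abs_le_iff less_top[symmetric])
  then show ?thesis
    using assms(1) by simp
qed

lemma (in prob_space) abs_prob_diff_inter_le:
  assumes "A \<in> events" "S \<in> events" "prob S \<ge> 1 - e"
  shows "\<bar>prob A - prob (A \<inter> S)\<bar> \<le> e"
proof -
  have "prob A - prob (A \<inter> S) = prob (A - S)"
    using assms by (simp add: Diff_Int finite_measure_Diff')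
  also have "\<dots> \<le> prob (space M - S)"
    using assms by (intro finite_measure_mono) (auto dest: sets.sets_into_space)
  also have "\<dots> = 1 - prob S"
    using assms by (simp add: prob_compl)
  finally show ?thesis
    using assms finite_measure_mono[of "A \<inter> S" A] by auto
qed

lemma (in real_distribution) exists_compact_open_measure_gap:
  assumes A: "A \<in> sets borel" and e: "e > 0"
  obtains K U where "compact K" "K \<subseteq> A" "A \<subseteq> U" "open U" "measure M U - measure M K \<le> e"
proof -
  have fin: "emeasure M (space M) \<noteq> \<infinity>"
    by simp
  obtain K where K: "compact K" "K \<subseteq> A" "measure M A - e / 2 < measure M K"
  proof (cases "measure M A - e / 2 < 0")
    case True
    then show ?thesis
      using that[of "{}"] by auto
  next
    case False
    have "ennreal (measure M A - e / 2) < emeasure M A"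
      using False e by (simp add: emeasure_eq_measure ennreal_less_iff)
    also have "\<dots> = (SUP K \<in> {K. K \<subseteq> A \<and> compact K}. emeasure M K)"
      by (rule inner_regular[OF events_eq_borel fin A])
    finally obtain K where "K \<subseteq> A" "compact K" "ennreal (measure M A - e / 2) < emeasure M K"
      by (auto simp: less_SUP_iff)
    then show ?thesis
      using that[of K] False by (simp add: emeasure_eq_measure ennreal_less_iff borel_compact)
  qed
  obtain U where U: "open U" "A \<subseteq> U" "measure M U < measure M A + e / 2"
  proof -
    have "(INF U \<in> {U. A \<subseteq> U \<and> open U}. emeasure M U) = emeasure M A"
      by (rule outer_regular[OF events_eq_borel fin A, symmetric])
    also have "\<dots> < ennreal (measure M A + e / 2)"
      using e by (simp add: emeasure_eq_measure ennreal_less_iff)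
    finally obtain U where "A \<subseteq> U" "open U" "emeasure M U < ennreal (measure M A + e / 2)"
      by (auto simp: INF_less_iff)
    then show ?thesis
      using that[of U] by (simp add: emeasure_eq_measure ennreal_less_iff)
  qed
  show ?thesis
    using that[OF K(1,2) U(2,1)] K U by linarith
qed

lemma (in real_distribution) exists_interval_measure_gt:
  assumes "e > 0"
  obtains R where "measure M {-R..R} > 1 - e"
proof -
  have "(\<lambda>i. measure M {-real i..real i}) \<longlonglongrightarrow> measure M (\<Union>i. {-real i..real i})"
    by (rule finite_Lim_measure_incseq) (auto simp: incseq_def)
  moreover have "(\<Union>i. {-real i..real i}) = UNIV"
  proof -
    have "x \<in> (\<Union>i. {-real i..real i})" for x
    proof -
      obtain n where "\<bar>x\<bar> \<le> real n"
        using real_arch_simple by blast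
      then have "x \<in> {-real n..real n}"
        by (auto simp: abs_le_iff)
      then show ?thesis
        by blast
    qed
    then show ?thesis
      by blast
  qed
  ultimately have "(\<lambda>i. measure M {-real i..real i}) \<longlonglongrightarrow> 1"
    using prob_space by simp
  then have "eventually (\<lambda>i. measure M {-real i..real i} > 1 - e) sequentially"
    by (rule order_tendstoD(1)) (use assms in simp)
  then show ?thesis
    using that by (auto simp: eventually_sequentially)
qed

lemma (in real_distribution) abs_measure_diff_integral_le:
  assumes "compact K" "K \<subseteq> A" "A \<subseteq> U" "open U" "A \<in> sets borel"
    and "continuous_on UNIV \<phi>" "\<And>x. 0 \<le> \<phi> x \<and> \<phi> x \<le> 1"
    and "\<And>x. x \<in> K \<Longrightarrow> \<phi> x = 1" "\<And>x. x \<notin> U \<Longrightarrow> \<phi> x = 0"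
  shows "\<bar>measure M A - integral\<^sup>L M \<phi>\<bar> \<le> measure M U - measure M K"
proof -
  have "K \<in> sets borel" "U \<in> sets borel"
    using assms(1,4) by (auto simp: borel_compact)
  then have "measure M K \<le> integral\<^sup>L M \<phi>" "integral\<^sup>L M \<phi> \<le> measure M U"
    "measure M K \<le> measure M A" "measure M A \<le> measure M U"
    using assms by (auto intro!: measure_le_integral integral_le_measure finite_measure_mono)
  then show ?thesis
    by linarith
qed

text \<open>One Urysohn function serves both measures: take the union of the inner compact sets and
  the intersection of the outer open sets.\<close>
lemma exists_continuous_approx_indicator:
  assumes M: "real_distribution M" and M': "real_distribution M'"
    and A: "A \<in> sets borel" "A \<subseteq> {-L..L}" and e: "e > 0"
  obtains \<phi> where "continuous_on UNIV \<phi>" "\<And>x. 0 \<le> \<phi> x \<and> \<phi> x \<le> 1"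
    "\<And>x. x \<notin> {-(L + 1)..L + 1} \<Longrightarrow> \<phi> x = 0"
    "\<bar>measure M A - integral\<^sup>L M \<phi>\<bar> \<le> e" "\<bar>measure M' A - integral\<^sup>L M' \<phi>\<bar> \<le> e"
proof -
  interpret M: real_distribution M by fact
  interpret M': real_distribution M' by fact
  obtain K1 U1 where 1: "compact K1" "K1 \<subseteq> A" "A \<subseteq> U1" "open U1"
      "measure M U1 - measure M K1 \<le> e"
    using M.exists_compact_open_measure_gap[OF A(1) e] .
  obtain K2 U2 where 2: "compact K2" "K2 \<subseteq> A" "A \<subseteq> U2" "open U2"
      "measure M' U2 - measure M' K2 \<le> e"
    using M'.exists_compact_open_measure_gap[OF A(1) e] .
  define K where "K = K1 \<union> K2"
  define U where "U = U1 \<inter> U2 \<inter> ball 0 (L + 1)"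
  have K: "compact K" "K \<subseteq> A"
    using 1 2 by (auto simp: K_def)
  have U: "open U" "A \<subseteq> U" "U \<subseteq> {-(L + 1)..L + 1}"
    using 1 2 A(2) by (fastforce simp: U_def abs_less_iff)+
  have "closed K" "closed (- U)" "K \<inter> - U = {}"
    using K U compact_imp_closed by auto
  from Urysohn[OF this, of 1 0] obtain \<phi> :: "real \<Rightarrow> real" where
    \<phi>: "continuous_on UNIV \<phi>" "\<And>x. \<phi> x \<in> closed_segment 1 0"
      "\<And>x. x \<in> K \<Longrightarrow> \<phi> x = 1" "\<And>x. x \<in> - U \<Longrightarrow> \<phi> x = 0"
    by metis
  have \<phi>01: "0 \<le> \<phi> x \<and> \<phi> x \<le> 1" for x
    using \<phi>(2) by (auto simp: closed_segment_eq_real_ivl)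
  have \<phi>0: "\<phi> x = 0" if "x \<notin> U" for x
    using that \<phi>(4) by simp
  have KU: "K \<in> sets borel" "U \<in> sets borel"
    using K U by (auto simp: borel_compact)
  show ?thesis
  proof
    show "\<phi> x = 0" if "x \<notin> {-(L + 1)..L + 1}" for x
      using that U(3) \<phi>0 by blast
    have "measure M U \<le> measure M U1" "measure M K1 \<le> measure M K"
      using KU 1 by (auto intro!: M.finite_measure_mono simp: U_def K_def)
    then show "\<bar>measure M A - integral\<^sup>L M \<phi>\<bar> \<le> e"
      using M.abs_measure_diff_integral_le[OF K U(2,1) A(1) \<phi>(1) \<phi>01 \<phi>(3) \<phi>0] 1(5) by linarith
    have "measure M' U \<le> measure M' U2" "measure M' K2 \<le> measure M' K"
      using KU 2 by (auto intro!: M'.finite_measure_mono simp: U_def K_def)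
    then show "\<bar>measure M' A - integral\<^sup>L M' \<phi>\<bar> \<le> e"
      using M'.abs_measure_diff_integral_le[OF K U(2,1) A(1) \<phi>(1) \<phi>01 \<phi>(3) \<phi>0] 2(5) by linarith
  qed (use \<phi> \<phi>01 in auto)
qed

definition test_function :: "real \<Rightarrow> (real \<Rightarrow> real) \<Rightarrow> bool" where
  "test_function R \<phi> \<longleftrightarrow>
     continuous_on UNIV \<phi> \<and> (\<forall>x. \<bar>\<phi> x\<bar> \<le> 1) \<and> (\<forall>x. x \<notin> {-R..R} \<longrightarrow> \<phi> x = 0)"

lemma test_functionD:
  assumes "test_function R \<phi>"
  shows "continuous_on UNIV \<phi>" "\<And>x. \<bar>\<phi> x\<bar> \<le> 1" "\<And>x. x \<notin> {-R..R} \<Longrightarrow> \<phi> x = 0"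
  using assms by (auto simp: test_function_def)

lemma tv_convI:
  assumes "\<And>\<epsilon>. \<epsilon> > 0 \<Longrightarrow>
    eventually (\<lambda>n. \<forall>A\<in>sets borel. \<bar>measure (M n) A - measure N A\<bar> \<le> \<epsilon>) sequentially"
  shows "tv_conv M N"
  unfolding tv_conv_def
proof (rule order_tendstoI)
  fix a :: real
  assume "a < 0"
  show "eventually (\<lambda>n. a < tv_dist (M n) N) sequentially"
    using assms[OF zero_less_one]
  proof eventually_elim
    case (elim n)
    then have "0 \<le> tv_dist (M n) N"
      unfolding tv_dist_def by (intro cSUP_upper2[of _ _ "{}"] bdd_aboveI2[of _ _ 1]) auto
    then show ?case
      using \<open>a < 0\<close> by simp
  qed
next
  fix a :: real
  assume "0 < a"
  then have "eventually (\<lambda>n. \<forall>A\<in>sets borel. \<bar>measure (M n) A - measure N A\<bar> \<le> a / 2)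
      sequentially"
    by (intro assms) simp
  then show "eventually (\<lambda>n. tv_dist (M n) N < a) sequentially"
  proof eventually_elim
    case (elim n)
    then have "tv_dist (M n) N \<le> a / 2"
      unfolding tv_dist_def by (intro cSUP_least) auto
    then show ?case
      using \<open>0 < a\<close> by simp
  qed
qed

lemma exists_eventually_less_if_limsup_tendsto_0:
  fixes B :: "nat \<Rightarrow> real \<Rightarrow> real"
  assumes "((\<lambda>\<alpha>. limsup (\<lambda>n. ereal \<bar>B n \<alpha>\<bar>)) \<longlongrightarrow> 0) (at_right 0)" "e > 0"
  shows "\<exists>\<alpha>>0. eventually (\<lambda>n. \<bar>B n \<alpha>\<bar> < e) sequentially"
proof -
  have "eventually (\<lambda>\<alpha>. limsup (\<lambda>n. ereal \<bar>B n \<alpha>\<bar>) < ereal e) (at_right 0)"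
    by (rule order_tendstoD(2)[OF assms(1)]) (use assms(2) in simp)
  then obtain b where b: "b > 0" "\<And>\<alpha>. 0 < \<alpha> \<Longrightarrow> \<alpha> < b \<Longrightarrow> limsup (\<lambda>n. ereal \<bar>B n \<alpha>\<bar>) < ereal e"
    by (auto simp: eventually_at_right_field)
  then have "eventually (\<lambda>n. ereal \<bar>B n (b / 2)\<bar> < ereal e) sequentially"
    by (intro Limsup_lessD) simp
  then show ?thesis
    using b(1) by (intro exI[of _ "b / 2"]) simp
qed

lemma steklov_of_test_function:
  assumes \<phi>: "test_function R \<phi>" and h: "h > 0"
  shows "(2 / h)-lipschitz_on UNIV (steklov h \<phi>)" "\<forall>x. \<bar>steklov h \<phi> x\<bar> \<le> 1"
    "\<forall>x. x \<notin> {-(R + h)..R + h} \<longrightarrow> steklov h \<phi> x = 0"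
  using lipschitz_on_steklov[OF test_functionD(1,2)[OF \<phi>] h]
    abs_steklov_le[OF test_functionD(1,2)[OF \<phi>] h]
    steklov_eq_0[where a = "-R" and b = R, OF test_functionD(1,3)[OF \<phi>] h] h
  by auto

lemma steklov_remainder:
  assumes \<phi>: "test_function R \<phi>" and h: "h > 0"
  defines "g \<equiv> \<lambda>x. (\<phi> x - steklov h \<phi> x) / 2"
  shows "continuous_on UNIV g" "\<exists>K. compact K \<and> (\<forall>x. x \<notin> K \<longrightarrow> g x = 0)"
    "\<forall>x. \<bar>g x\<bar> \<le> 1" "(SUP x::real. \<bar>LBINT t=0..ereal x. g t\<bar>) \<le> h"
proof -
  note cont = test_functionD(1)[OF \<phi>] and bound = test_functionD(2)[OF \<phi>]
  show "continuous_on UNIV g"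
    unfolding g_def by (intro continuous_intros cont continuous_on_steklov) auto
  show "\<exists>K. compact K \<and> (\<forall>x. x \<notin> K \<longrightarrow> g x = 0)"
    using test_functionD(3)[OF \<phi>] steklov_of_test_function(3)[OF \<phi> h] h
    by (intro exI[of _ "{-(R + h)..R + h}"]) (auto simp: g_def)
  show "\<forall>x. \<bar>g x\<bar> \<le> 1"
  proof
    fix x
    show "\<bar>g x\<bar> \<le> 1"
      using bound[of x] abs_steklov_le[OF cont bound h, of x] unfolding g_def by (simp add: abs_le_iff)
  qed
  show "(SUP x::real. \<bar>LBINT t=0..ereal x. g t\<bar>) \<le> h"
    using abs_LBINT_diff_steklov_le[OF cont bound h] by (intro cSUP_least) (auto simp: g_def mult.commute)
qed

lemma abs_integral_steklov_remainder_le: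
  assumes bound: "\<And>\<phi>. continuous_on UNIV \<phi> \<Longrightarrow> (\<exists>K. compact K \<and> (\<forall>x. x \<notin> K \<longrightarrow> \<phi> x = 0)) \<Longrightarrow>
      (\<forall>x. \<bar>\<phi> x\<bar> \<le> 1) \<Longrightarrow> \<bar>integral\<^sup>L M \<phi>\<bar> \<le> (SUP x::real. \<bar>LBINT t=0..ereal x. \<phi> t\<bar>) / \<alpha> + b"
    and \<phi>: "test_function R \<phi>" and "h > 0" "\<alpha> > 0"
  shows "\<bar>integral\<^sup>L M (\<lambda>x. (\<phi> x - steklov h \<phi> x) / 2)\<bar> \<le> h / \<alpha> + b"
proof -
  note remainder = steklov_remainder[OF \<phi> \<open>h > 0\<close>]
  have "\<bar>integral\<^sup>L M (\<lambda>x. (\<phi> x - steklov h \<phi> x) / 2)\<bar>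
      \<le> (SUP x::real. \<bar>LBINT t=0..ereal x. (\<phi> t - steklov h \<phi> t) / 2\<bar>) / \<alpha> + b"
    by (rule bound[OF remainder(1-3)])
  also have "\<dots> \<le> h / \<alpha> + b"
    using divide_right_mono[OF remainder(4), of \<alpha>] \<open>\<alpha> > 0\<close> by simp
  finally show ?thesis .
qed

lemma (in real_distribution) integral_eq_remainder_add_steklov:
  assumes \<phi>: "test_function R \<phi>" and h: "h > 0"
  shows "integral\<^sup>L M \<phi> =
    2 * integral\<^sup>L M (\<lambda>x. (\<phi> x - steklov h \<phi> x) / 2) + integral\<^sup>L M (steklov h \<phi>)"
proof -
  note cont = test_functionD(1)[OF \<phi>] and bound = test_functionD(2)[OF \<phi>]
  have "integrable M \<phi>" "integrable M (steklov h \<phi>)"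
    using bound abs_steklov_le[OF cont bound h]
    by (auto intro!: integrable_bounded_continuous[of _ 1] cont continuous_on_steklov)
  then show ?thesis
    by (simp add: diff_divide_distrib)
qed

locale weak_conv_distributions =
  fixes \<mu> :: "nat \<Rightarrow> real measure" and \<mu>_lim :: "real measure"
  assumes distr: "\<And>n. real_distribution (\<mu> n)"
    and distr_lim: "real_distribution \<mu>_lim"
    and weak: "weak_conv_m \<mu> \<mu>_lim"
begin

sublocale lim: real_distribution \<mu>_lim
  by (rule distr_lim)

lemma integral_conv:
  fixes f :: "real \<Rightarrow> real"
  assumes "continuous_on UNIV f" "\<And>x. \<bar>f x\<bar> \<le> B"
  shows "(\<lambda>n. integral\<^sup>L (\<mu> n) f) \<longlonglongrightarrow> integral\<^sup>L \<mu>_lim f"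
  using assms
  by (intro weak_conv_imp_integral_bdd_continuous_conv[OF distr distr_lim weak, of f B])
    (auto simp: continuous_on_eq_continuous_at)

lemma abs_integral_lim_le:
  fixes f :: "real \<Rightarrow> real"
  assumes "continuous_on UNIV f" "\<And>x. \<bar>f x\<bar> \<le> B"
    and "eventually (\<lambda>n. \<bar>integral\<^sup>L (\<mu> n) f\<bar> \<le> c) sequentially"
  shows "\<bar>integral\<^sup>L \<mu>_lim f\<bar> \<le> c"
  by (rule tendsto_upperbound[OF tendsto_rabs[OF integral_conv[OF assms(1,2)]] assms(3)]) simp

lemma exists_interval_measure_ge:
  assumes "e > 0"
  obtains L where "measure \<mu>_lim {-L..L} \<ge> 1 - e"
    "eventually (\<lambda>n. measure (\<mu> n) {-L..L} \<ge> 1 - e) sequentially"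
proof -
  obtain R where R: "measure \<mu>_lim {-R..R} > 1 - e"
    using lim.exists_interval_measure_gt[OF assms] .
  define cutoff where "cutoff x = max 0 (min 1 (R + 1 - \<bar>x\<bar>))" for x
  have cont: "continuous_on UNIV cutoff"
    unfolding cutoff_def by (intro continuous_intros)
  have cutoff01: "0 \<le> cutoff x \<and> cutoff x \<le> 1" for x
    by (auto simp: cutoff_def)
  have "measure \<mu>_lim {-R..R} \<le> integral\<^sup>L \<mu>_lim cutoff"
    by (rule lim.measure_le_integral[OF _ cont cutoff01]) (auto simp: cutoff_def)
  then have "eventually (\<lambda>n. integral\<^sup>L (\<mu> n) cutoff > 1 - e) sequentially"
    using R cutoff01 by (intro order_tendstoD(1)[OF integral_conv[OF cont, of 1]]) auto
  moreover have "integral\<^sup>L (\<mu> n) cutoff \<le> measure (\<mu> n) {-(R + 1)..R + 1}" for n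
    by (rule real_distribution.integral_le_measure[OF distr _ cont cutoff01]) (auto simp: cutoff_def)
  ultimately have "eventually (\<lambda>n. measure (\<mu> n) {-(R + 1)..R + 1} \<ge> 1 - e) sequentially"
    by (elim eventually_mono) (meson less_le_trans less_imp_le)
  moreover have "measure \<mu>_lim {-R..R} \<le> measure \<mu>_lim {-(R + 1)..R + 1}"
    by (rule lim.finite_measure_mono) auto
  ultimately show ?thesis
    using R that[of "R + 1"] by simp
qed

lemma eventually_uniform_integral_conv_lipschitz:
  fixes C R \<epsilon> :: real
  assumes "\<epsilon> > 0"
  shows "eventually (\<lambda>n. \<forall>\<psi>. C-lipschitz_on UNIV \<psi> \<longrightarrow> (\<forall>x. \<bar>\<psi> x\<bar> \<le> 1) \<longrightarrow>
      (\<forall>x. x \<notin> {-R..R} \<longrightarrow> \<psi> x = 0) \<longrightarrow>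
      \<bar>integral\<^sup>L (\<mu> n) \<psi> - integral\<^sup>L \<mu>_lim \<psi>\<bar> \<le> \<epsilon>) sequentially"
proof -
  define c where "c = \<bar>C\<bar> + 1"
  have c: "c > 0" "C \<le> c"
    by (auto simp: c_def add_nonneg_pos)
  define \<delta> where "\<delta> = \<epsilon> / 4 / c"
  have \<delta>: "\<delta> > 0"
    using assms c by (simp add: \<delta>_def)
  have "2 * C * \<delta> \<le> 2 * c * \<delta>"
    using \<delta> c by (intro mult_right_mono) auto
  also have "\<dots> = \<epsilon> / 2"
    using c by (simp add: \<delta>_def)
  finally have C\<delta>: "2 * C * \<delta> \<le> \<epsilon> / 2" .
  define N where "N = \<lceil>R / \<delta>\<rceil>"
  define T where "T k = (\<lambda>x. hat (x / \<delta> - of_int k))" for k :: int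
  have "(\<lambda>n. \<Sum>k\<in>{-N..N}. \<bar>integral\<^sup>L (\<mu> n) (T k) - integral\<^sup>L \<mu>_lim (T k)\<bar>) \<longlonglongrightarrow> (\<Sum>k\<in>{-N..N}. 0)"
    unfolding T_def using \<delta>
    by (intro tendsto_sum tendsto_rabs_zero LIM_zero integral_conv[of _ 1] abs_hat_le_1
        continuous_on_compose2[OF continuous_on_hat] continuous_intros) auto
  then have "eventually (\<lambda>n. (\<Sum>k\<in>{-N..N}. \<bar>integral\<^sup>L (\<mu> n) (T k) - integral\<^sup>L \<mu>_lim (T k)\<bar>) < \<epsilon> / 2)
      sequentially"
    using assms by (intro order_tendstoD(2)) auto
  then show ?thesis
  proof (elim eventually_mono, intro allI impI)
    fix n and \<psi> :: "real \<Rightarrow> real"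
    assume "(\<Sum>k\<in>{-N..N}. \<bar>integral\<^sup>L (\<mu> n) (T k) - integral\<^sup>L \<mu>_lim (T k)\<bar>) < \<epsilon> / 2"
      and "C-lipschitz_on UNIV \<psi>" "\<forall>x. \<bar>\<psi> x\<bar> \<le> 1" "\<forall>x. x \<notin> {-R..R} \<longrightarrow> \<psi> x = 0"
    then show "\<bar>integral\<^sup>L (\<mu> n) \<psi> - integral\<^sup>L \<mu>_lim \<psi>\<bar> \<le> \<epsilon>"
      using abs_integral_diff_le_hat_integrals[OF distr[of n] distr_lim, of C \<psi> R \<delta>] \<delta> C\<delta>
      unfolding N_def T_def by fastforce
  qed
qed

lemma eventually_uniform_integral_conv_test_function:
  fixes B :: "nat \<Rightarrow> real \<Rightarrow> real" and R \<epsilon> :: real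
  assumes bound: "\<And>\<phi> n \<alpha>. continuous_on UNIV \<phi> \<Longrightarrow>
      (\<exists>K. compact K \<and> (\<forall>x. x \<notin> K \<longrightarrow> \<phi> x = 0)) \<Longrightarrow> (\<forall>x. \<bar>\<phi> x\<bar> \<le> 1) \<Longrightarrow> \<alpha> > 0 \<Longrightarrow>
      \<bar>integral\<^sup>L (\<mu> n) \<phi>\<bar> \<le> (SUP x::real. \<bar>LBINT t=0..ereal x. \<phi> t\<bar>) / \<alpha> + \<bar>B n \<alpha>\<bar>"
    and small: "\<And>e. e > 0 \<Longrightarrow> \<exists>\<alpha>>0. eventually (\<lambda>n. \<bar>B n \<alpha>\<bar> < e) sequentially"
    and "\<epsilon> > 0"
  shows "eventually (\<lambda>n. \<forall>\<phi>. test_function R \<phi> \<longrightarrow>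
      \<bar>integral\<^sup>L (\<mu> n) \<phi> - integral\<^sup>L \<mu>_lim \<phi>\<bar> \<le> \<epsilon>) sequentially"
proof -
  define e where "e = \<epsilon> / 9"
  have e: "e > 0"
    using assms(3) by (simp add: e_def)
  obtain \<alpha> where \<alpha>: "\<alpha> > 0" and B_small: "eventually (\<lambda>n. \<bar>B n \<alpha>\<bar> < e) sequentially"
    using small[OF e] by blast
  define h where "h = \<alpha> * e"
  have h: "h > 0" and "h / \<alpha> = e"
    using \<alpha> e by (simp_all add: h_def)
  define g where "g \<phi> = (\<lambda>x. (\<phi> x - steklov h \<phi> x) / 2)" for \<phi>
  have g_small: "\<bar>integral\<^sup>L (\<mu> n) (g \<phi>)\<bar> \<le> 2 * e" if "test_function R \<phi>" "\<bar>B n \<alpha>\<bar> < e" for \<phi> n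
  proof -
    have "\<bar>integral\<^sup>L (\<mu> n) (g \<phi>)\<bar> \<le> h / \<alpha> + \<bar>B n \<alpha>\<bar>"
      unfolding g_def
      by (rule abs_integral_steklov_remainder_le[OF _ that(1) h \<alpha>]) (rule bound[OF _ _ _ \<alpha>])
    then show ?thesis
      using \<open>h / \<alpha> = e\<close> that(2) by linarith
  qed
  have g_lim: "\<bar>integral\<^sup>L \<mu>_lim (g \<phi>)\<bar> \<le> 2 * e" if \<phi>: "test_function R \<phi>" for \<phi>
  proof (rule abs_integral_lim_le)
    show "continuous_on UNIV (g \<phi>)" "\<bar>g \<phi> x\<bar> \<le> 1" for x
      using steklov_remainder(1,3)[OF \<phi> h] by (simp_all add: g_def)
    show "eventually (\<lambda>m. \<bar>integral\<^sup>L (\<mu> m) (g \<phi>)\<bar> \<le> 2 * e) sequentially"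
      using B_small by (rule eventually_mono) (rule g_small[OF \<phi>])
  qed
  have "eventually (\<lambda>n. \<forall>\<psi>. (2 / h)-lipschitz_on UNIV \<psi> \<longrightarrow> (\<forall>x. \<bar>\<psi> x\<bar> \<le> 1) \<longrightarrow>
      (\<forall>x. x \<notin> {-(R + h)..R + h} \<longrightarrow> \<psi> x = 0) \<longrightarrow>
      \<bar>integral\<^sup>L (\<mu> n) \<psi> - integral\<^sup>L \<mu>_lim \<psi>\<bar> \<le> e) sequentially"
    by (rule eventually_uniform_integral_conv_lipschitz[OF e])
  with B_small show ?thesis
  proof eventually_elim
    case (elim n)
    show ?case
    proof (intro allI impI)
      fix \<phi>
      assume \<phi>: "test_function R \<phi>"
      have steklov_conv:
        "\<bar>integral\<^sup>L (\<mu> n) (steklov h \<phi>) - integral\<^sup>L \<mu>_lim (steklov h \<phi>)\<bar> \<le> e"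
        using elim(2) steklov_of_test_function[OF \<phi> h] by blast
      have split: "integral\<^sup>L M \<phi> = 2 * integral\<^sup>L M (g \<phi>) + integral\<^sup>L M (steklov h \<phi>)"
        if "real_distribution M" for M
        unfolding g_def by (rule real_distribution.integral_eq_remainder_add_steklov[OF that \<phi> h])
      have "\<epsilon> = 9 * e"
        by (simp add: e_def)
      then show "\<bar>integral\<^sup>L (\<mu> n) \<phi> - integral\<^sup>L \<mu>_lim \<phi>\<bar> \<le> \<epsilon>"
        using split[OF distr[of n]] split[OF distr_lim] g_small[OF \<phi> elim(1)] g_lim[OF \<phi>] steklov_conv
        by (simp only: abs_le_iff) linarith
    qed
  qed
qed

lemma tv_conv_if_uniform_integral_conv:
  assumes unif: "\<And>R \<epsilon>. \<epsilon> > 0 \<Longrightarrow> eventually (\<lambda>n. \<forall>\<phi>. test_function R \<phi> \<longrightarrow>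
      \<bar>integral\<^sup>L (\<mu> n) \<phi> - integral\<^sup>L \<mu>_lim \<phi>\<bar> \<le> \<epsilon>) sequentially"
  shows "tv_conv \<mu> \<mu>_lim"
proof (rule tv_convI)
  fix \<epsilon> :: real
  assume "\<epsilon> > 0"
  define e where "e = \<epsilon> / 5"
  have e: "e > 0"
    using \<open>\<epsilon> > 0\<close> by (simp add: e_def)
  obtain L where L_lim: "measure \<mu>_lim {-L..L} \<ge> 1 - e"
    and L_eventually: "eventually (\<lambda>n. measure (\<mu> n) {-L..L} \<ge> 1 - e) sequentially"
    using exists_interval_measure_ge[OF e] .
  show "eventually (\<lambda>n. \<forall>A\<in>sets borel. \<bar>measure (\<mu> n) A - measure \<mu>_lim A\<bar> \<le> \<epsilon>) sequentially"
    using unif[OF e, of "L + 1"] L_eventually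
  proof eventually_elim
    case (elim n)
    show ?case
    proof
      fix A :: "real set"
      assume A: "A \<in> sets borel"
      interpret n: real_distribution "\<mu> n"
        by (rule distr)
      let ?A = "A \<inter> {-L..L}"
      obtain \<phi> where \<phi>: "continuous_on UNIV \<phi>" "\<And>x. 0 \<le> \<phi> x \<and> \<phi> x \<le> 1"
        "\<And>x. x \<notin> {-(L + 1)..L + 1} \<Longrightarrow> \<phi> x = 0"
        and approx: "\<bar>measure (\<mu> n) ?A - integral\<^sup>L (\<mu> n) \<phi>\<bar> \<le> e"
          "\<bar>measure \<mu>_lim ?A - integral\<^sup>L \<mu>_lim \<phi>\<bar> \<le> e"
        using exists_continuous_approx_indicator[OF distr distr_lim _ _ e, of ?A L] A by auto
      have "test_function (L + 1) \<phi>"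
        using \<phi> by (auto simp: test_function_def abs_le_iff)
      then have "\<bar>integral\<^sup>L (\<mu> n) \<phi> - integral\<^sup>L \<mu>_lim \<phi>\<bar> \<le> e"
        using elim(1) by blast
      moreover have "\<bar>measure (\<mu> n) A - measure (\<mu> n) ?A\<bar> \<le> e"
        using A elim(2) by (intro n.abs_prob_diff_inter_le) auto
      moreover have "\<bar>measure \<mu>_lim A - measure \<mu>_lim ?A\<bar> \<le> e"
        using A L_lim by (intro lim.abs_prob_diff_inter_le) auto
      moreover have "\<epsilon> = 5 * e"
        by (simp add: e_def)
      ultimately show "\<bar>measure (\<mu> n) A - measure \<mu>_lim A\<bar> \<le> \<epsilon>"
        using approx by (simp only: abs_le_iff) linarith
    qed
  qed
qed

end

theorem lemma5:
  fixes \<mu> :: "nat \<Rightarrow> real measure" and \<mu>_lim :: "real measure"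
    and B :: "nat \<Rightarrow> real \<Rightarrow> real"
  assumes distr: "\<And>n. n \<ge> 1 \<Longrightarrow> real_distribution (\<mu> n)"
    and distr_lim: "real_distribution \<mu>_lim"
    and weak: "weak_conv_m \<mu> \<mu>_lim"
    and bound: "\<And>\<phi> n \<alpha>. continuous_on UNIV \<phi> \<Longrightarrow>
                 (\<exists>K. compact K \<and> (\<forall>x. x \<notin> K \<longrightarrow> \<phi> x = 0)) \<Longrightarrow>
                 (\<forall>x. \<bar>\<phi> x\<bar> \<le> 1) \<Longrightarrow> n \<ge> 1 \<Longrightarrow> \<alpha> > 0 \<Longrightarrow>
                 \<bar>integral\<^sup>L (\<mu> n) \<phi>\<bar>
                   \<le> (SUP x::real. \<bar>LBINT t=0..ereal x. \<phi> t\<bar>) / \<alpha> + \<bar>B n \<alpha>\<bar>"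
    and lim: "((\<lambda>\<alpha>. limsup (\<lambda>n. ereal \<bar>B n \<alpha>\<bar>)) \<longlongrightarrow> 0) (at_right 0)"
  shows "tv_conv \<mu> \<mu>_lim"
proof -
  interpret weak_conv_distributions "\<lambda>n. \<mu> (Suc n)" \<mu>_lim
  proof (rule weak_conv_distributions.intro)
    show "real_distribution (\<mu> (Suc n))" for n
      by (rule distr) simp
    show "weak_conv_m (\<lambda>n. \<mu> (Suc n)) \<mu>_lim"
      using weak unfolding weak_conv_m_def weak_conv_def by (auto intro: LIMSEQ_Suc)
  qed (fact distr_lim)
  have small: "\<exists>\<alpha>>0. eventually (\<lambda>n. \<bar>B (Suc n) \<alpha>\<bar> < e) sequentially" if e: "e > 0" for e
  proof -
    obtain \<alpha> where "\<alpha> > 0" "eventually (\<lambda>n. \<bar>B n \<alpha>\<bar> < e) sequentially"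
      using exists_eventually_less_if_limsup_tendsto_0[OF lim e] by blast
    then show ?thesis
      using eventually_sequentially_Suc[of "\<lambda>n. \<bar>B n \<alpha>\<bar> < e"] by auto
  qed
  have "tv_conv (\<lambda>n. \<mu> (Suc n)) \<mu>_lim"
  proof (rule tv_conv_if_uniform_integral_conv[OF eventually_uniform_integral_conv_test_function])
    show "\<bar>integral\<^sup>L (\<mu> (Suc n)) \<phi>\<bar>
        \<le> (SUP x::real. \<bar>LBINT t=0..ereal x. \<phi> t\<bar>) / \<alpha> + \<bar>B (Suc n) \<alpha>\<bar>"
      if "continuous_on UNIV \<phi>" "\<exists>K. compact K \<and> (\<forall>x. x \<notin> K \<longrightarrow> \<phi> x = 0)"
        "\<forall>x. \<bar>\<phi> x\<bar> \<le> 1" "\<alpha> > 0" for \<phi> n \<alpha>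
      using bound[OF that(1-3) _ that(4)] by simp
  qed (use small in auto)
  then show ?thesis
    unfolding tv_conv_def by (rule LIMSEQ_imp_Suc)
qed

end
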